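(* Under the standing assumptions below, let $t>0$ with $F(t)>0$ and let $g:\mathbb R_+\to\mathbb R$ be Borel with $\mathbb E|g(\tau)|<\infty$. Then $\mathbb P$-a.s. $$\mathbb E[g(\tau)\mid\zeta_t]=\frac{1}{F(t)}\int_{(0,t]}g(r)\,\mathbb P_\tau(dr)\;\mathbb I_{\{\zeta_t=1\}}+\int_{(t,+\infty)}g(r)\,\phi_t^r(\zeta_t)\,\mathbb P_\tau(dr)\;\mathbb I_{\{0<\zeta_t<1\}},$$ where for $r>t$ and $x\in\mathbb R$, $$\phi_t^r(x)=\frac{(1-x)^r\,\frac{\Gamma(r)}{\Gamma(r-t)}}{\int_{(t,+\infty)}(1-x)^s\,\frac{\Gamma(s)}{\Gamma(s-t)}\,\mathbb P_\tau(ds)}\,\mathbb I_{(0,1)}(x).$$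
   Context: $(\Omega,\mathcal F,\mathbb P)$ complete; $\gamma$ a standard gamma process (driftless subordinator, $\gamma_0=0$, càdlàg, $\mathbb E[e^{-\lambda\gamma_t}]=(1+\lambda)^{-t}$); $\tau$ a strictly positive random variable independent of $\gamma$, with distribution function $F$ and law $\mathbb P_\tau$; $\zeta_t=\gamma_{t\wedge\tau}/\gamma_\tau$, $t\ge0$. Equivalently, $\phi_t^r(x)=\varphi^r_t(x)/\int_{(t,\infty)}\varphi^s_t(x)\mathbb P_\tau(ds)$ where $\varphi^r_t(x)=\frac{\Gamma(r)}{\Gamma(t)\Gamma(r-t)}x^{t-1}(1-x)^{r-t-1}\mathbb I_{(0,1)}(x)$ is the Beta$(t,r-t)$ density of $\gamma_t/\gamma_r$. *)

theory Defs
  imports "HOL-Probability.Probability"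
begin

definition gamma_density :: "real \<Rightarrow> real \<Rightarrow> real" where
  "gamma_density a x = (if 0 < x then x powr (a - 1) * exp (- x) / Gamma a else 0)"

definition gamma_process :: "'a measure \<Rightarrow> (real \<Rightarrow> 'a \<Rightarrow> real) \<Rightarrow> bool" where
  "gamma_process M \<gamma> \<longleftrightarrow>
     prob_space M \<and>
     (\<forall>t\<ge>0. \<gamma> t \<in> borel_measurable M) \<and>
     (\<forall>\<omega>\<in>space M. \<gamma> 0 \<omega> = 0) \<and>
     (\<forall>\<omega>\<in>space M. mono_on {0..} (\<lambda>t. \<gamma> t \<omega>)) \<and>
     (\<forall>\<omega>\<in>space M. \<forall>t\<ge>0. continuous (at_right t) (\<lambda>s. \<gamma> s \<omega>)) \<and>
     (\<forall>\<omega>\<in>space M. \<forall>t>0. \<exists>l. ((\<lambda>s. \<gamma> s \<omega>) \<longlongrightarrow> l) (at_left t)) \<and>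
     (\<forall>s t. 0 \<le> s \<and> s < t \<longrightarrow>
        distributed M lborel (\<lambda>\<omega>. \<gamma> t \<omega> - \<gamma> s \<omega>) (\<lambda>x. ennreal (gamma_density (t - s) x))) \<and>
     (\<forall>(n::nat) (ts::nat \<Rightarrow> real). 0 \<le> ts 0 \<and> (\<forall>i<n. ts i < ts (Suc i)) \<longrightarrow>
        prob_space.indep_vars M (\<lambda>_. borel) (\<lambda>i \<omega>. \<gamma> (ts (Suc i)) \<omega> - \<gamma> (ts i) \<omega>) {..<n})"

definition zeta :: "(real \<Rightarrow> 'a \<Rightarrow> real) \<Rightarrow> ('a \<Rightarrow> real) \<Rightarrow> real \<Rightarrow> 'a \<Rightarrow> real" where
  "zeta \<gamma> \<tau> t \<omega> = \<gamma> (min t (\<tau> \<omega>)) \<omega> / \<gamma> (\<tau> \<omega>) \<omega>"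

definition phi :: "real measure \<Rightarrow> real \<Rightarrow> real \<Rightarrow> real \<Rightarrow> real" where
  "phi P t r x =
     ((1 - x) powr r * (Gamma r / Gamma (r - t)) /
      (\<integral>s\<in>{t<..}. (1 - x) powr s * (Gamma s / Gamma (s - t)) \<partial>P)) * indicator {0<..<1} x"

end

theory Submission
  imports Defs
begin

text \<open>Given \<open>\<tau> = r\<close>, the variable \<open>\<zeta>\<^sub>t\<close> equals \<open>1\<close> almost surely if \<open>r \<le> t\<close>, while for
  \<open>r > t\<close> it is \<open>V / (1 + V)\<close> with \<open>V = \<gamma>\<^sub>t / (\<gamma>\<^sub>r - \<gamma>\<^sub>t)\<close> a ratio of independent
  Gamma(\<open>t\<close>) and Gamma(\<open>r - t\<close>) variables, i.e. beta-prime distributed with density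
  \<open>v\<^sup>t\<^sup>-\<^sup>1 (1 + v)\<^sup>-\<^sup>r \<Gamma>(r) / (\<Gamma>(t) \<Gamma>(r - t))\<close>.  This density factors into a function of \<open>v\<close>
  times \<open>(1 + v)\<^sup>-\<^sup>r \<Gamma>(r) / \<Gamma>(r - t)\<close>, so Bayes' formula for \<open>\<tau>\<close> given \<open>V = v\<close> on
  \<open>{\<tau> > t}\<close> yields exactly \<open>\<phi>\<^sub>t\<^sup>r\<close> (note \<open>1 - x = 1 / (1 + v)\<close> for \<open>x = v / (1 + v)\<close>), while on
  \<open>{\<zeta>\<^sub>t = 1}\<close>, which is a.s. \<open>{\<tau> \<le> t}\<close>, the conditional expectation is the average of
  \<open>g(\<tau>)\<close> over \<open>{\<tau> \<le> t}\<close>.  Independence of \<open>\<tau>\<close> and \<open>\<gamma>\<close> is used through the dyadic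
  values of the path, from which right-continuity recovers \<open>\<zeta>\<^sub>t\<close>.  The identity is
  first proved for nonnegative \<open>g\<close> with nonnegative integrals and Tonelli's theorem,
  and then extended by splitting \<open>g\<close> into positive and negative parts.\<close>

lemma gamma_density_nonneg: "0 < a \<Longrightarrow> 0 \<le> gamma_density a x"
  unfolding gamma_density_def by (auto intro!: divide_nonneg_pos)

lemma borel_measurable_Gamma_real[measurable]: "(Gamma :: real \<Rightarrow> real) \<in> borel_measurable borel"
proof -
  have "(\<lambda>x::real. inverse (rGamma x)) \<in> borel_measurable borel"
    by (intro borel_measurable_inverse borel_measurable_continuous_onI continuous_on_rGamma)
  then show ?thesis by (simp add: rGamma_inverse_Gamma)
qed

lemma borel_measurable_Gamma_real_compose[measurable (raw)]:
  "f \<in> borel_measurable N \<Longrightarrow> (\<lambda>x. Gamma (f x :: real)) \<in> borel_measurable N"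
  using measurable_compose[OF _ borel_measurable_Gamma_real] by (simp add: o_def)

lemma borel_measurable_gamma_density[measurable (raw)]:
  assumes [measurable]: "f \<in> borel_measurable N" "g \<in> borel_measurable N"
  shows "(\<lambda>x. gamma_density (f x) (g x)) \<in> borel_measurable N"
  unfolding gamma_density_def by measurable

lemma nn_integral_powr_exp_scaled:
  fixes a c :: real
  assumes a: "0 < a" and c: "0 < c"
  shows "(\<integral>\<^sup>+x. ennreal (x powr (a - 1) * exp (- (c * x))) * indicator {0<..} x \<partial>lborel)
         = ennreal (c powr (- a) * Gamma a)"
proof -
  let ?F = "\<lambda>x. ennreal (x powr (a - 1) * exp (- (c * x))) * indicator {0<..} x"
  have Gamma_int: "(\<integral>\<^sup>+x. ennreal (x powr (a - 1) / exp x) * indicator {0..} x \<partial>lborel) = ennreal (Gamma a)"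
    by (rule nn_integral_has_integral_lebesgue'[OF _ Gamma_integral_real[OF a]]) simp
  have "(\<integral>\<^sup>+x. ?F x \<partial>lborel) = ennreal (1 / c) * (\<integral>\<^sup>+y. ?F (y / c) \<partial>lborel)"
    using nn_integral_real_affine[of ?F "1 / c" 0] c by simp
  also have "(\<integral>\<^sup>+y. ?F (y / c) \<partial>lborel)
      = (\<integral>\<^sup>+y. ennreal (c powr (1 - a)) * (ennreal (y powr (a - 1) / exp y) * indicator {0..} y) \<partial>lborel)"
  proof (intro nn_integral_cong)
    fix y :: real
    have "(y / c) powr (a - 1) = c powr (1 - a) * y powr (a - 1)" if "0 < y"
      using c that by (simp add: powr_divide powr_diff divide_simps)
    then show "?F (y / c) = ennreal (c powr (1 - a)) * (ennreal (y powr (a - 1) / exp y) * indicator {0..} y)"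
      using c by (cases "0 < y") (auto simp: indicator_def ennreal_mult'[symmetric] exp_minus
          field_simps zero_less_divide_iff not_less)
  qed
  also have "\<dots> = ennreal (c powr (1 - a)) * ennreal (Gamma a)"
    by (simp add: nn_integral_cmult Gamma_int)
  also have "ennreal (1 / c) * \<dots> = ennreal (c powr (- a) * Gamma a)"
    using c a by (simp add: ennreal_mult'[symmetric] less_imp_le powr_diff powr_minus
        field_simps)
  finally show ?thesis .
qed

lemma nn_integral_gamma_density:
  assumes a: "0 < a" shows "(\<integral>\<^sup>+x. ennreal (gamma_density a x) \<partial>lborel) = 1"
proof -
  have G: "0 < Gamma a" using a by (rule Gamma_real_pos)
  have "(\<integral>\<^sup>+x. ennreal (gamma_density a x) \<partial>lborel)
      = ennreal (1 / Gamma a) * (\<integral>\<^sup>+x. ennreal (x powr (a - 1) * exp (- (1 * x))) * indicator {0<..} x \<partial>lborel)"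
    using G by (subst nn_integral_cmult[symmetric]) (auto intro!: nn_integral_cong
        simp: gamma_density_def indicator_def ennreal_mult'[symmetric])
  also have "\<dots> = 1"
    unfolding nn_integral_powr_exp_scaled[OF a zero_less_one] using G by (simp add: ennreal_mult'[symmetric])
  finally show ?thesis .
qed

definition beta_prime_density :: "real \<Rightarrow> real \<Rightarrow> real \<Rightarrow> real" where
  "beta_prime_density a b v =
     (if 0 < v then v powr (a - 1) * (1 + v) powr (- (a + b)) * Gamma (a + b) / (Gamma a * Gamma b) else 0)"

lemma nn_integral_gamma_density_scaled:
  assumes a: "0 < a" and b: "0 < b"
  shows "(\<integral>\<^sup>+w. ennreal (gamma_density b w * w * gamma_density a (w * v)) \<partial>lborel)
         = ennreal (beta_prime_density a b v)"
proof (cases "0 < v")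
  case False
  have "ennreal (gamma_density b w * w * gamma_density a (w * v)) = 0" for w
    using False by (cases "0 < w") (auto simp: gamma_density_def zero_less_mult_iff)
  then show ?thesis using False by (simp add: beta_prime_density_def)
next
  case v: True
  define C where "C = v powr (a - 1) / (Gamma a * Gamma b)"
  have C: "0 \<le> C" unfolding C_def using a b by (auto intro: less_imp_le)
  have "ennreal (gamma_density b w * w * gamma_density a (w * v))
      = ennreal C * (ennreal (w powr (a + b - 1) * exp (- ((1 + v) * w))) * indicator {0<..} w)" for w
  proof (cases "0 < w")
    case w: True
    have "gamma_density b w * w * gamma_density a (w * v)
        = C * ((w powr (b - 1) * w * w powr (a - 1)) * (exp (- w) * exp (- (w * v))))"
      using w v by (simp add: gamma_density_def C_def powr_mult ac_simps)
    also have "w powr (b - 1) * w * w powr (a - 1) = w powr (a + b - 1)"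
      using w by (simp add: powr_add[symmetric] powr_diff add.commute)
    also have "exp (- w) * exp (- (w * v)) = exp (- ((1 + v) * w))"
      by (simp add: exp_add[symmetric] algebra_simps)
    finally show ?thesis using w C by (simp add: ennreal_mult'[symmetric])
  qed (simp add: gamma_density_def)
  then have "(\<integral>\<^sup>+w. ennreal (gamma_density b w * w * gamma_density a (w * v)) \<partial>lborel)
      = ennreal C * ennreal ((1 + v) powr (- (a + b)) * Gamma (a + b))"
    using a b v by (simp add: nn_integral_cmult nn_integral_powr_exp_scaled)
  also have "\<dots> = ennreal (beta_prime_density a b v)"
    using v C a b by (simp add: beta_prime_density_def C_def ennreal_mult'[symmetric]
        less_imp_le)
  finally show ?thesis .
qed

lemma nn_integral_gamma_density_ratio_subst:
  assumes a: "0 < a" and b: "0 < b" and h[measurable]: "h \<in> borel_measurable borel"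
  shows "ennreal (gamma_density b w) * (\<integral>\<^sup>+x. ennreal (gamma_density a x) * h (x / (x + w)) \<partial>lborel)
       = (\<integral>\<^sup>+v. ennreal (gamma_density b w * w * gamma_density a (w * v)) * h (v / (1 + v)) \<partial>lborel)"
proof (cases "0 < w")
  case False
  then show ?thesis by (simp add: gamma_density_def)
next
  case w: True
  have "(\<integral>\<^sup>+x. ennreal (gamma_density a x) * h (x / (x + w)) \<partial>lborel)
      = \<bar>w\<bar> * (\<integral>\<^sup>+v. ennreal (gamma_density a (0 + w * v)) * h ((0 + w * v) / ((0 + w * v) + w)) \<partial>lborel)"
    by (rule nn_integral_real_affine) (use w in auto)
  also have "(\<integral>\<^sup>+v. ennreal (gamma_density a (0 + w * v)) * h ((0 + w * v) / ((0 + w * v) + w)) \<partial>lborel)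
      = (\<integral>\<^sup>+v. ennreal (gamma_density a (w * v)) * h (v / (1 + v)) \<partial>lborel)"
  proof (intro nn_integral_cong)
    fix v :: real
    have "w * v / (w * v + w) = v / (1 + v)" if "0 < v"
    proof -
      have "w * v + w = w * (1 + v)" by (simp add: algebra_simps)
      then show ?thesis using w that by simp
    qed
    then show "ennreal (gamma_density a (0 + w * v)) * h ((0 + w * v) / ((0 + w * v) + w))
        = ennreal (gamma_density a (w * v)) * h (v / (1 + v))"
      using w by (cases "0 < v") (auto simp: gamma_density_def zero_less_mult_iff)
  qed
  finally have "ennreal (gamma_density b w) * (\<integral>\<^sup>+x. ennreal (gamma_density a x) * h (x / (x + w)) \<partial>lborel)
      = ennreal (gamma_density b w * w) * (\<integral>\<^sup>+v. ennreal (gamma_density a (w * v)) * h (v / (1 + v)) \<partial>lborel)"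
    using w b by (simp add: ennreal_mult[OF gamma_density_nonneg] mult.assoc)
  also have "\<dots> = (\<integral>\<^sup>+v. ennreal (gamma_density b w * w) * (ennreal (gamma_density a (w * v)) * h (v / (1 + v))) \<partial>lborel)"
    by (rule nn_integral_cmult[symmetric]) simp
  also have "\<dots> = (\<integral>\<^sup>+v. ennreal (gamma_density b w * w * gamma_density a (w * v)) * h (v / (1 + v)) \<partial>lborel)"
  proof (intro nn_integral_cong)
    fix v :: real
    have "0 \<le> gamma_density b w * w" "0 \<le> gamma_density a (w * v)"
      using w a b by (simp_all add: gamma_density_nonneg)
    then have "ennreal (gamma_density b w * w * gamma_density a (w * v))
        = ennreal (gamma_density b w * w) * ennreal (gamma_density a (w * v))"
      by (rule ennreal_mult)
    then show "ennreal (gamma_density b w * w) * (ennreal (gamma_density a (w * v)) * h (v / (1 + v)))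
        = ennreal (gamma_density b w * w * gamma_density a (w * v)) * h (v / (1 + v))"
      by (simp only: mult.assoc)
  qed
  finally show ?thesis .
qed

lemma nn_integral_gamma_density_ratio:
  assumes a: "0 < a" and b: "0 < b" and h[measurable]: "h \<in> borel_measurable borel"
  shows "(\<integral>\<^sup>+w. ennreal (gamma_density b w) * (\<integral>\<^sup>+x. ennreal (gamma_density a x) * h (x / (x + w)) \<partial>lborel) \<partial>lborel)
       = (\<integral>\<^sup>+v. h (v / (1 + v)) * ennreal (beta_prime_density a b v) \<partial>lborel)"
proof -
  have "(\<integral>\<^sup>+w. ennreal (gamma_density b w) * (\<integral>\<^sup>+x. ennreal (gamma_density a x) * h (x / (x + w)) \<partial>lborel) \<partial>lborel)
      = (\<integral>\<^sup>+w. (\<integral>\<^sup>+v. ennreal (gamma_density b w * w * gamma_density a (w * v)) * h (v / (1 + v)) \<partial>lborel) \<partial>lborel)"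
    by (intro nn_integral_cong nn_integral_gamma_density_ratio_subst[OF a b h])
  also have "\<dots> = (\<integral>\<^sup>+v. (\<integral>\<^sup>+w. ennreal (gamma_density b w * w * gamma_density a (w * v)) \<partial>lborel) * h (v / (1 + v)) \<partial>lborel)"
    by (subst lborel_pair.Fubini') (simp_all add: nn_integral_multc)
  also have "\<dots> = (\<integral>\<^sup>+v. h (v / (1 + v)) * ennreal (beta_prime_density a b v) \<partial>lborel)"
    unfolding nn_integral_gamma_density_scaled[OF a b] by (simp add: mult.commute)
  finally show ?thesis .
qed

lemma nn_integral_beta_prime_density:
  assumes "0 < a" "0 < b" shows "(\<integral>\<^sup>+v. ennreal (beta_prime_density a b v) \<partial>lborel) = 1"
proof -
  have "(\<integral>\<^sup>+v. ennreal (beta_prime_density a b v) \<partial>lborel)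
      = (\<integral>\<^sup>+w. ennreal (gamma_density b w) * (\<integral>\<^sup>+x. ennreal (gamma_density a x) * 1 \<partial>lborel) \<partial>lborel)"
    using nn_integral_gamma_density_ratio[OF assms, of "\<lambda>_. 1"] by simp
  also have "\<dots> = 1"
    using assms by (simp only: mult_1_right nn_integral_gamma_density)
  finally show ?thesis .
qed

lemma (in prob_space) nn_integral_ratio_indep_gamma:
  assumes a: "0 < a" and b: "0 < b"
    and X: "distributed M lborel X (\<lambda>x. ennreal (gamma_density a x))"
    and W: "distributed M lborel W (\<lambda>x. ennreal (gamma_density b x))"
    and XW: "indep_var lborel X lborel W"
    and h[measurable]: "h \<in> borel_measurable borel"
  shows "(\<integral>\<^sup>+\<omega>. h (X \<omega> / (X \<omega> + W \<omega>)) \<partial>M) = (\<integral>\<^sup>+v. h (v / (1 + v)) * ennreal (beta_prime_density a b v) \<partial>lborel)"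
proof -
  have [measurable]: "X \<in> borel_measurable M" "W \<in> borel_measurable M"
    using X W by (auto simp: distributed_def)
  have joint: "distr M (lborel \<Otimes>\<^sub>M lborel) (\<lambda>\<omega>. (X \<omega>, W \<omega>)) = distr M lborel X \<Otimes>\<^sub>M distr M lborel W"
    using XW by (simp add: indep_var_distribution_eq)
  have X_law: "distr M lborel X = density lborel (\<lambda>x. ennreal (gamma_density a x))"
    and W_law: "distr M lborel W = density lborel (\<lambda>x. ennreal (gamma_density b x))"
    using X W by (simp_all add: distributed_def)
  interpret DX: prob_space "distr M lborel X" by (rule prob_space_distr) simp
  interpret DW: prob_space "distr M lborel W" by (rule prob_space_distr) simp
  interpret P: pair_prob_space "distr M lborel X" "distr M lborel W" ..
  define H where "H = (\<lambda>p::real \<times> real. h (fst p / (fst p + snd p)))"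
  have [measurable]: "H \<in> borel_measurable (lborel \<Otimes>\<^sub>M lborel)" unfolding H_def by measurable
  have "(\<integral>\<^sup>+\<omega>. h (X \<omega> / (X \<omega> + W \<omega>)) \<partial>M) = (\<integral>\<^sup>+p. H p \<partial>distr M (lborel \<Otimes>\<^sub>M lborel) (\<lambda>\<omega>. (X \<omega>, W \<omega>)))"
    by (subst nn_integral_distr) (auto simp: H_def)
  also have "\<dots> = (\<integral>\<^sup>+w. (\<integral>\<^sup>+x. H (x, w) \<partial>distr M lborel X) \<partial>distr M lborel W)"
    unfolding joint by (rule P.nn_integral_snd[symmetric]) measurable
  also have "\<dots> = (\<integral>\<^sup>+w. ennreal (gamma_density b w) * (\<integral>\<^sup>+x. ennreal (gamma_density a x) * h (x / (x + w)) \<partial>lborel) \<partial>lborel)"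
    unfolding X_law W_law H_def by (subst nn_integral_density) (auto simp: nn_integral_density)
  finally show ?thesis unfolding nn_integral_gamma_density_ratio[OF a b h] .
qed

lemma (in prob_space) nn_integral_indep_var:
  assumes XY: "indep_var S X T Y" and F[measurable]: "F \<in> borel_measurable (S \<Otimes>\<^sub>M T)"
  shows "(\<integral>\<^sup>+\<omega>. F (X \<omega>, Y \<omega>) \<partial>M) = (\<integral>\<^sup>+x. (\<integral>\<^sup>+\<omega>. F (x, Y \<omega>) \<partial>M) \<partial>distr M S X)"
proof -
  have [measurable]: "X \<in> measurable M S" "Y \<in> measurable M T"
    using XY by (auto dest: indep_var_rv1 indep_var_rv2)
  have joint: "distr M (S \<Otimes>\<^sub>M T) (\<lambda>\<omega>. (X \<omega>, Y \<omega>)) = distr M S X \<Otimes>\<^sub>M distr M T Y"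
    using XY by (simp add: indep_var_distribution_eq)
  interpret DX: prob_space "distr M S X" by (rule prob_space_distr) simp
  interpret DY: prob_space "distr M T Y" by (rule prob_space_distr) simp
  interpret P: pair_prob_space "distr M S X" "distr M T Y" ..
  have "(\<integral>\<^sup>+\<omega>. F (X \<omega>, Y \<omega>) \<partial>M) = (\<integral>\<^sup>+p. F p \<partial>(distr M S X \<Otimes>\<^sub>M distr M T Y))"
    unfolding joint[symmetric] by (subst nn_integral_distr) auto
  also have "\<dots> = (\<integral>\<^sup>+x. (\<integral>\<^sup>+y. F (x, y) \<partial>distr M T Y) \<partial>distr M S X)"
    by (rule DY.nn_integral_fst[symmetric]) measurable
  also have "\<dots> = (\<integral>\<^sup>+x. (\<integral>\<^sup>+\<omega>. F (x, Y \<omega>) \<partial>M) \<partial>distr M S X)"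
    by (intro nn_integral_cong) (subst nn_integral_distr; simp)
  finally show ?thesis .
qed

lemma integrable_indicator_comp_mult:
  fixes h :: "'a \<Rightarrow> real"
  assumes h: "integrable M h" and [measurable]: "X \<in> measurable M N" "B \<in> sets N"
  shows "integrable M (\<lambda>\<omega>. indicator B (X \<omega>) * h \<omega>)"
proof -
  have [measurable]: "h \<in> borel_measurable M" using h by (rule borel_measurable_integrable)
  show ?thesis
    by (rule Bochner_Integration.integrable_bound[OF h]) (auto simp: indicator_def)
qed

definition dyadic_samples :: "(real \<Rightarrow> real) \<Rightarrow> nat \<times> nat \<Rightarrow> real" where
  "dyadic_samples f = (\<lambda>(k, j). f (real j / 2 ^ k))"

text \<open>\<open>nat \<lfloor>2 ^ k * r\<rfloor> + 1\<close> indexes the first point of the grid \<open>2\<^sup>-\<^sup>k \<nat>\<close> strictly to the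
  right of \<open>r\<close>, so for right-continuous paths the limit recovers the value at \<open>r\<close>.\<close>
definition dyadic_right_limit :: "real \<Rightarrow> (nat \<times> nat \<Rightarrow> real) \<Rightarrow> real" where
  "dyadic_right_limit r y = lim (\<lambda>k. y (k, nat (\<lfloor>2 ^ k * r\<rfloor> + 1)))"

lemma borel_measurable_dyadic_right_limit[measurable (raw)]:
  assumes "f \<in> borel_measurable N" and "g \<in> measurable N (PiM UNIV (\<lambda>_. borel))"
  shows "(\<lambda>x. dyadic_right_limit (f x) (g x)) \<in> borel_measurable N"
proof -
  have "(\<lambda>p::real \<times> (nat \<times> nat \<Rightarrow> real). nat (\<lfloor>2 ^ k * fst p\<rfloor> + 1))
      \<in> measurable (borel \<Otimes>\<^sub>M PiM UNIV (\<lambda>_. borel)) (count_space UNIV)" for k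
    using measurable_compose[OF _ measurable_real_floor, of "\<lambda>p::real \<times> (nat \<times> nat \<Rightarrow> real). 2 ^ k * fst p"]
    by (rule measurable_compose) auto
  moreover have "(\<lambda>p::real \<times> (nat \<times> nat \<Rightarrow> real). snd p (k, j))
      \<in> borel_measurable (borel \<Otimes>\<^sub>M PiM UNIV (\<lambda>_. borel))" for k j
    by measurable
  ultimately have "(\<lambda>p::real \<times> (nat \<times> nat \<Rightarrow> real). snd p (k, nat (\<lfloor>2 ^ k * fst p\<rfloor> + 1)))
      \<in> borel_measurable (borel \<Otimes>\<^sub>M PiM UNIV (\<lambda>_. borel))" for k
    using measurable_compose_countable[where f = "\<lambda>j p. snd p (k, j)"] by blast
  then have "(\<lambda>p. dyadic_right_limit (fst p) (snd p)) \<in> borel_measurable (borel \<Otimes>\<^sub>M PiM UNIV (\<lambda>_. borel))"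
    unfolding dyadic_right_limit_def by (rule borel_measurable_lim_metric)
  from measurable_compose[OF measurable_Pair[OF assms] this] show ?thesis by simp
qed

lemma tendsto_dyadic_at_right:
  fixes r :: real assumes "0 \<le> r"
  shows "LIM k sequentially. real (nat (\<lfloor>2 ^ k * r\<rfloor> + 1)) / 2 ^ k :> at_right r"
proof -
  define d where "d k = (real_of_int \<lfloor>2 ^ k * r\<rfloor> + 1) / 2 ^ k" for k :: nat
  have eq: "real (nat (\<lfloor>2 ^ k * r\<rfloor> + 1)) / 2 ^ k = d k" for k
    using assms by (simp add: d_def)
  have gt: "r < d k" for k
  proof -
    have "2 ^ k * r < real_of_int \<lfloor>2 ^ k * r\<rfloor> + 1" by linarith
    then show ?thesis by (simp add: d_def field_simps)
  qed
  have le: "d k \<le> r + (1 / 2) ^ k" for k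
  proof -
    have "real_of_int \<lfloor>2 ^ k * r\<rfloor> \<le> 2 ^ k * r" by linarith
    then show ?thesis by (simp add: d_def field_simps)
  qed
  have "(\<lambda>k. r + (1 / 2 :: real) ^ k) \<longlonglongrightarrow> r"
    using tendsto_add[OF tendsto_const LIMSEQ_power_zero[of "1 / 2 :: real"]] by simp
  then have "d \<longlonglongrightarrow> r"
    by (rule tendsto_sandwich[rotated 2, OF tendsto_const]) (auto intro: always_eventually less_imp_le gt le)
  moreover have "\<forall>\<^sub>F k in sequentially. d k \<in> {r<..} \<and> d k \<noteq> r"
    using gt by (auto intro: always_eventually)
  ultimately show ?thesis unfolding eq filterlim_at by simp
qed

lemma dyadic_right_limit_samples:
  assumes "0 \<le> r" and "continuous (at_right r) f"
  shows "dyadic_right_limit r (dyadic_samples f) = f r"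
proof -
  have "(f \<longlongrightarrow> f r) (at_right r)" using assms(2) by (simp add: continuous_within)
  from filterlim_compose[OF this tendsto_dyadic_at_right[OF assms(1)]]
  show ?thesis unfolding dyadic_right_limit_def dyadic_samples_def by (simp add: limI)
qed

lemma measurable_sigma_generators:
  assumes "G \<subseteq> Pow \<Omega>" and "\<And>A. A \<in> sets N \<Longrightarrow> f -` A \<inter> \<Omega> \<in> G" and "f \<in> \<Omega> \<rightarrow> space N"
  shows "f \<in> measurable (sigma \<Omega> G) N"
  using assms by (intro measurableI) (auto simp: space_measure_of_conv)

lemma vimage_sets_subset_sigma_sets:
  assumes "f \<in> measurable (sigma \<Omega> G) N" and "G \<subseteq> Pow \<Omega>"
  shows "{f -` A \<inter> \<Omega> | A. A \<in> sets N} \<subseteq> sigma_sets \<Omega> G"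
  using measurable_sets[OF assms(1)] assms(2) by (auto simp: space_measure_of_conv)

locale gamma_bridge = prob_space M for M :: "'a measure" +
  fixes \<gamma> :: "real \<Rightarrow> 'a \<Rightarrow> real" and \<tau> :: "'a \<Rightarrow> real" and t :: real
  assumes gamma_process: "gamma_process M \<gamma>"
    and tau_measurable[measurable]: "\<tau> \<in> borel_measurable M"
    and tau_pos: "\<forall>\<omega>\<in>space M. 0 < \<tau> \<omega>"
    and indep_tau_gamma: "indep_set
      (sigma_sets (space M) {\<tau> -` A \<inter> space M | A. A \<in> sets borel})
      (sigma_sets (space M) (\<Union>s\<in>{0..}. {\<gamma> s -` A \<inter> space M | A. A \<in> sets borel}))"
    and t_pos: "0 < t"
begin

lemma gamma_measurable: "0 \<le> s \<Longrightarrow> \<gamma> s \<in> borel_measurable M"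
  using gamma_process unfolding gamma_process_def by auto

lemma gamma_zero: "\<omega> \<in> space M \<Longrightarrow> \<gamma> 0 \<omega> = 0"
  using gamma_process unfolding gamma_process_def by auto

lemma gamma_continuous_at_right: "\<omega> \<in> space M \<Longrightarrow> 0 \<le> s \<Longrightarrow> continuous (at_right s) (\<lambda>u. \<gamma> u \<omega>)"
  using gamma_process unfolding gamma_process_def by auto

lemma distributed_gamma_increment: "0 \<le> s \<Longrightarrow> s < u \<Longrightarrow>
   distributed M lborel (\<lambda>\<omega>. \<gamma> u \<omega> - \<gamma> s \<omega>) (\<lambda>x. ennreal (gamma_density (u - s) x))"
  using gamma_process unfolding gamma_process_def by auto

lemma indep_vars_gamma_increments: "0 \<le> ts 0 \<Longrightarrow> (\<forall>i<n. ts i < ts (Suc i)) \<Longrightarrow>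
   indep_vars (\<lambda>_. borel) (\<lambda>i \<omega>. \<gamma> (ts (Suc i)) \<omega> - \<gamma> (ts i) \<omega>) {..<n}"
  using gamma_process unfolding gamma_process_def by auto

lemma AE_gamma_pos:
  assumes "0 < r" shows "AE \<omega> in M. 0 < \<gamma> r \<omega>"
proof -
  have d: "distributed M lborel (\<lambda>\<omega>. \<gamma> r \<omega> - \<gamma> 0 \<omega>) (\<lambda>x. ennreal (gamma_density r x))"
    using distributed_gamma_increment[of 0 r] assms by simp
  then have law: "distr M lborel (\<lambda>\<omega>. \<gamma> r \<omega> - \<gamma> 0 \<omega>) = density lborel (\<lambda>x. ennreal (gamma_density r x))"
    and X: "(\<lambda>\<omega>. \<gamma> r \<omega> - \<gamma> 0 \<omega>) \<in> measurable M lborel"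
    by (simp_all add: distributed_def)
  have "AE x in distr M lborel (\<lambda>\<omega>. \<gamma> r \<omega> - \<gamma> 0 \<omega>). 0 < x"
    unfolding law by (subst AE_density) (auto simp: gamma_density_def)
  then have "AE \<omega> in M. 0 < \<gamma> r \<omega> - \<gamma> 0 \<omega>"
    by (rule AE_distrD[OF X])
  then show ?thesis by (auto simp: gamma_zero)
qed

lemma indep_var_gamma_increments:
  assumes "0 \<le> s" "s < u" "u < r"
  shows "indep_var lborel (\<lambda>\<omega>. \<gamma> u \<omega> - \<gamma> s \<omega>) lborel (\<lambda>\<omega>. \<gamma> r \<omega> - \<gamma> u \<omega>)"
proof -
  define ts where "ts = (\<lambda>i::nat. if i = 0 then s else if i = 1 then u else r)"
  define X where "X = (\<lambda>i \<omega>. \<gamma> (ts (Suc i)) \<omega> - \<gamma> (ts i) \<omega>)"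
  have "indep_vars (\<lambda>_. borel) X {..<2}"
    unfolding X_def using assms by (intro indep_vars_gamma_increments) (auto simp: ts_def less_Suc_eq)
  then have "indep_var (PiM {0} (\<lambda>_. borel)) (\<lambda>\<omega>. restrict (\<lambda>i. X i \<omega>) {0})
                  (PiM {1} (\<lambda>_. borel)) (\<lambda>\<omega>. restrict (\<lambda>i. X i \<omega>) {1})"
    by (rule indep_var_restrict) auto
  then have "indep_var lborel ((\<lambda>f. f 0) \<circ> (\<lambda>\<omega>. restrict (\<lambda>i. X i \<omega>) {0}))
                       lborel ((\<lambda>f. f 1) \<circ> (\<lambda>\<omega>. restrict (\<lambda>i. X i \<omega>) {1}))"
    by (rule indep_var_compose) auto
  then show ?thesis by (simp add: o_def X_def ts_def)
qed

lemma nn_integral_gamma_ratio: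
  assumes u: "0 < u" and r: "u < r" and h[measurable]: "h \<in> borel_measurable borel"
  shows "(\<integral>\<^sup>+\<omega>. h (\<gamma> u \<omega> / \<gamma> r \<omega>) \<partial>M)
       = (\<integral>\<^sup>+v. h (v / (1 + v)) * ennreal (beta_prime_density u (r - u) v) \<partial>lborel)"
proof -
  have "(\<integral>\<^sup>+\<omega>. h (\<gamma> u \<omega> / \<gamma> r \<omega>) \<partial>M)
      = (\<integral>\<^sup>+\<omega>. h ((\<gamma> u \<omega> - \<gamma> 0 \<omega>) / ((\<gamma> u \<omega> - \<gamma> 0 \<omega>) + (\<gamma> r \<omega> - \<gamma> u \<omega>))) \<partial>M)"
    by (intro nn_integral_cong) (simp add: gamma_zero)
  also have "\<dots> = (\<integral>\<^sup>+v. h (v / (1 + v)) * ennreal (beta_prime_density u (r - u) v) \<partial>lborel)"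
    using u r distributed_gamma_increment[of 0 u]
    by (intro nn_integral_ratio_indep_gamma distributed_gamma_increment indep_var_gamma_increments h) auto
  finally show ?thesis .
qed

definition gamma_samples :: "'a \<Rightarrow> nat \<times> nat \<Rightarrow> real" where
  "gamma_samples \<omega> = dyadic_samples (\<lambda>s. \<gamma> s \<omega>)"

lemma dyadic_right_limit_gamma_samples:
  "\<omega> \<in> space M \<Longrightarrow> 0 \<le> r \<Longrightarrow> dyadic_right_limit r (gamma_samples \<omega>) = \<gamma> r \<omega>"
  unfolding gamma_samples_def by (intro dyadic_right_limit_samples gamma_continuous_at_right)

definition zeta_of_samples :: "real \<Rightarrow> (nat \<times> nat \<Rightarrow> real) \<Rightarrow> real" where
  "zeta_of_samples r y = dyadic_right_limit (min t r) y / dyadic_right_limit r y"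

lemma borel_measurable_zeta_of_samples[measurable (raw)]:
  assumes [measurable]: "f \<in> borel_measurable N" "g \<in> measurable N (PiM UNIV (\<lambda>_. borel))"
  shows "(\<lambda>x. zeta_of_samples (f x) (g x)) \<in> borel_measurable N"
  unfolding zeta_of_samples_def by measurable

lemma zeta_of_gamma_samples:
  "\<omega> \<in> space M \<Longrightarrow> 0 < r \<Longrightarrow> zeta_of_samples r (gamma_samples \<omega>) = \<gamma> (min t r) \<omega> / \<gamma> r \<omega>"
  using t_pos by (simp add: zeta_of_samples_def dyadic_right_limit_gamma_samples)

lemma zeta_eq_zeta_of_samples:
  "\<omega> \<in> space M \<Longrightarrow> zeta \<gamma> \<tau> t \<omega> = zeta_of_samples (\<tau> \<omega>) (gamma_samples \<omega>)"
  using tau_pos by (simp add: zeta_def zeta_of_gamma_samples)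

lemma gamma_samples_measurable_sigma:
  "gamma_samples \<in> measurable (sigma (space M) (\<Union>s\<in>{0..}. {\<gamma> s -` A \<inter> space M | A. A \<in> sets borel}))
     (PiM UNIV (\<lambda>_. borel))"
proof (rule measurable_PiM_single')
  fix i :: "nat \<times> nat"
  obtain k j where i: "i = (k, j)" by (cases i)
  show "(\<lambda>\<omega>. gamma_samples \<omega> i)
      \<in> borel_measurable (sigma (space M) (\<Union>s\<in>{0..}. {\<gamma> s -` A \<inter> space M | A. A \<in> sets borel}))"
    by (rule measurable_sigma_generators)
      (auto simp: gamma_samples_def dyadic_samples_def i intro!: bexI[of _ "real j / 2 ^ k"])
qed (simp add: space_measure_of_conv)

lemma gamma_samples_measurable[measurable]: "gamma_samples \<in> measurable M (PiM UNIV (\<lambda>_. borel))"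
  by (rule measurable_PiM_single')
    (auto simp: gamma_samples_def dyadic_samples_def split: prod.split intro: gamma_measurable)

definition tau_samples :: "'a \<Rightarrow> nat \<times> nat \<Rightarrow> real" where
  "tau_samples \<omega> = (\<lambda>_. \<tau> \<omega>)"

lemma tau_samples_measurable[measurable]: "tau_samples \<in> measurable M (PiM UNIV (\<lambda>_. borel))"
  by (rule measurable_PiM_single') (simp_all add: tau_samples_def)

text \<open>\<open>indep_var\<close> requires both variables to take values in the same type, hence \<open>\<tau>\<close> is
  embedded into the sample space of the path as a constant sequence.\<close>
lemma indep_var_tau_gamma_samples:
  "indep_var (PiM UNIV (\<lambda>_. borel)) tau_samples (PiM UNIV (\<lambda>_. borel)) gamma_samples"
  unfolding indep_var_eq
proof (intro conjI)
  let ?G = "\<Union>s\<in>{0..}. {\<gamma> s -` A \<inter> space M | A. A \<in> sets borel}"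
  let ?T = "{\<tau> -` A \<inter> space M | A. A \<in> sets borel}"
  have "(\<lambda>\<omega>. tau_samples \<omega> i) \<in> borel_measurable (sigma (space M) ?T)" for i
  proof (rule measurable_sigma_generators)
    show "(\<lambda>\<omega>. tau_samples \<omega> i) -` A \<inter> space M \<in> ?T" if "A \<in> sets borel" for A
      using that unfolding tau_samples_def by blast
  qed auto
  then have "tau_samples \<in> measurable (sigma (space M) ?T) (PiM UNIV (\<lambda>_. borel))"
    by (rule measurable_PiM_single') (simp add: space_measure_of_conv)
  then have "{tau_samples -` A \<inter> space M | A. A \<in> sets (PiM UNIV (\<lambda>_. borel))} \<subseteq> sigma_sets (space M) ?T"
    by (rule vimage_sets_subset_sigma_sets) blast
  moreover have "{gamma_samples -` A \<inter> space M | A. A \<in> sets (PiM UNIV (\<lambda>_. borel))} \<subseteq> sigma_sets (space M) ?G"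
    by (rule vimage_sets_subset_sigma_sets[OF gamma_samples_measurable_sigma]) blast
  ultimately show "indep_set
      (sigma_sets (space M) {tau_samples -` A \<inter> space M | A. A \<in> sets (PiM UNIV (\<lambda>_. borel))})
      (sigma_sets (space M) {gamma_samples -` A \<inter> space M | A. A \<in> sets (PiM UNIV (\<lambda>_. borel))})"
    using indep_tau_gamma unfolding indep_set_def
    by (elim indep_sets_mono_sets) (simp split: bool.split add: sigma_sets_mono)
qed (simp_all add: tau_samples_measurable gamma_samples_measurable)

lemma zeta_measurable[measurable]: "zeta \<gamma> \<tau> t \<in> borel_measurable M"
  by (subst measurable_cong[OF zeta_eq_zeta_of_samples]) simp_all

abbreviation Ptau :: "real measure" where
  "Ptau \<equiv> distr M borel \<tau>"

sublocale Ptau: prob_space Ptau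
  by (rule prob_space_distr) simp

lemma AE_Ptau_pos: "AE r in Ptau. 0 < r"
  using tau_pos by (subst AE_distr_iff) auto

lemma nn_integral_tau_zeta:
  assumes [measurable]: "f \<in> borel_measurable borel" "h \<in> borel_measurable borel"
  shows "(\<integral>\<^sup>+\<omega>. f (\<tau> \<omega>) * h (zeta \<gamma> \<tau> t \<omega>) \<partial>M)
       = (\<integral>\<^sup>+r. f r * (\<integral>\<^sup>+\<omega>. h (\<gamma> (min t r) \<omega> / \<gamma> r \<omega>) \<partial>M) \<partial>Ptau)"
proof -
  define G where "G r = f r * (\<integral>\<^sup>+\<omega>. h (zeta_of_samples r (gamma_samples \<omega>)) \<partial>M)" for r
  have "(\<lambda>(r, \<omega>). h (zeta_of_samples r (gamma_samples \<omega>))) \<in> borel_measurable (borel \<Otimes>\<^sub>M M)"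
    unfolding split_beta' by measurable
  then have [measurable]: "G \<in> borel_measurable borel"
    unfolding G_def by (intro borel_measurable_times_ennreal borel_measurable_nn_integral) simp_all
  have "(\<integral>\<^sup>+\<omega>. f (\<tau> \<omega>) * h (zeta \<gamma> \<tau> t \<omega>) \<partial>M)
      = (\<integral>\<^sup>+\<omega>. (\<lambda>(x, y). f (x (0, 0)) * h (zeta_of_samples (x (0, 0)) y)) (tau_samples \<omega>, gamma_samples \<omega>) \<partial>M)"
    by (intro nn_integral_cong) (simp add: zeta_eq_zeta_of_samples tau_samples_def)
  also have "\<dots> = (\<integral>\<^sup>+x. (\<integral>\<^sup>+\<omega>. f (x (0, 0)) * h (zeta_of_samples (x (0, 0)) (gamma_samples \<omega>)) \<partial>M)
      \<partial>distr M (PiM UNIV (\<lambda>_. borel)) tau_samples)"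
    by (subst nn_integral_indep_var[OF indep_var_tau_gamma_samples]) (simp_all add: split_beta')
  also have "\<dots> = (\<integral>\<^sup>+x. G (x (0, 0)) \<partial>distr M (PiM UNIV (\<lambda>_. borel)) tau_samples)"
    unfolding G_def by (intro nn_integral_cong nn_integral_cmult) measurable
  also have "\<dots> = (\<integral>\<^sup>+r. G r \<partial>Ptau)"
    by (simp add: nn_integral_distr tau_samples_def)
  also have "\<dots> = (\<integral>\<^sup>+r. f r * (\<integral>\<^sup>+\<omega>. h (\<gamma> (min t r) \<omega> / \<gamma> r \<omega>) \<partial>M) \<partial>Ptau)"
    using AE_Ptau_pos
    by (rule nn_integral_cong_AE[OF AE_mp], intro AE_I2 impI)
      (simp add: G_def zeta_of_gamma_samples cong: nn_integral_cong)
  finally show ?thesis .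
qed

text \<open>The conditional law of \<open>\<zeta>\<^sub>t\<close> given \<open>\<tau> = r\<close>, acting on nonnegative test functions.\<close>
definition zeta_kernel :: "real \<Rightarrow> (real \<Rightarrow> ennreal) \<Rightarrow> ennreal" where
  "zeta_kernel r h =
     (if r \<le> t then h 1 else \<integral>\<^sup>+v. h (v / (1 + v)) * ennreal (beta_prime_density t (r - t) v) \<partial>lborel)"

lemma borel_measurable_zeta_kernel[measurable]:
  assumes [measurable]: "h \<in> borel_measurable borel"
  shows "(\<lambda>r. zeta_kernel r h) \<in> borel_measurable borel"
  unfolding zeta_kernel_def beta_prime_density_def by measurable

lemma nn_integral_zeta_given_tau:
  assumes r: "0 < r" and h[measurable]: "h \<in> borel_measurable borel"
  shows "(\<integral>\<^sup>+\<omega>. h (\<gamma> (min t r) \<omega> / \<gamma> r \<omega>) \<partial>M) = zeta_kernel r h"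
proof (cases "r \<le> t")
  case True
  have "(\<integral>\<^sup>+\<omega>. h (\<gamma> (min t r) \<omega> / \<gamma> r \<omega>) \<partial>M) = (\<integral>\<^sup>+\<omega>. h 1 \<partial>M)"
    using AE_gamma_pos[OF r] by (rule nn_integral_cong_AE[OF AE_mp]) (use True in auto)
  then show ?thesis using True by (simp add: zeta_kernel_def emeasure_space_1)
next
  case False
  then show ?thesis using t_pos nn_integral_gamma_ratio[of t r h] by (simp add: zeta_kernel_def)
qed

lemma nn_integral_tau_zeta_kernel:
  assumes f[measurable]: "f \<in> borel_measurable borel" and h[measurable]: "h \<in> borel_measurable borel"
  shows "(\<integral>\<^sup>+\<omega>. f (\<tau> \<omega>) * h (zeta \<gamma> \<tau> t \<omega>) \<partial>M) = (\<integral>\<^sup>+r. f r * zeta_kernel r h \<partial>Ptau)"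
  unfolding nn_integral_tau_zeta[OF f h]
  by (rule nn_integral_cong_AE[OF AE_mp[OF AE_Ptau_pos]]) (simp add: nn_integral_zeta_given_tau)

text \<open>For \<open>s > t\<close> the beta-prime density factors as \<open>v_weight v * tau_weight s v\<close>; the second
  factor, normalised over \<open>P\<^sub>\<tau>\<close>, is the posterior density of \<open>\<tau>\<close> given \<open>V = v\<close>.\<close>
definition tau_weight :: "real \<Rightarrow> real \<Rightarrow> real" where
  "tau_weight s v = (if t < s then (1 + v) powr (- s) * Gamma s / Gamma (s - t) else 0)"

definition v_weight :: "real \<Rightarrow> real" where
  "v_weight v = (if 0 < v then v powr (t - 1) / Gamma t else 0)"

lemma tau_weight_nonneg: "0 \<le> tau_weight s v"
  using t_pos unfolding tau_weight_def by (auto intro!: divide_nonneg_pos less_imp_le)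

lemma v_weight_nonneg: "0 \<le> v_weight v"
  using t_pos unfolding v_weight_def by (auto intro!: divide_nonneg_pos)

lemma borel_measurable_tau_weight[measurable (raw)]:
  assumes [measurable]: "a \<in> borel_measurable N" "b \<in> borel_measurable N"
  shows "(\<lambda>x. tau_weight (a x) (b x)) \<in> borel_measurable N"
  unfolding tau_weight_def by measurable

lemma borel_measurable_v_weight[measurable]: "v_weight \<in> borel_measurable borel"
  unfolding v_weight_def by measurable

lemma beta_prime_density_eq_weights:
  "t < s \<Longrightarrow> beta_prime_density t (s - t) v = v_weight v * tau_weight s v"
  unfolding beta_prime_density_def v_weight_def tau_weight_def by simp

lemma ennreal_beta_prime_density_eq_weights:
  "t < s \<Longrightarrow> ennreal (beta_prime_density t (s - t) v) = ennreal (v_weight v) * ennreal (tau_weight s v)"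
  by (simp add: beta_prime_density_eq_weights ennreal_mult v_weight_nonneg tau_weight_nonneg)

lemma phi_eq_tau_weight:
  assumes v: "0 < v" and s: "t < s"
  shows "phi Ptau t s (v / (1 + v)) = tau_weight s v / (\<integral>s'. tau_weight s' v \<partial>Ptau)"
proof -
  have "1 - v / (1 + v) = 1 / (1 + v)" using v by (simp add: field_simps)
  then have eq: "(1 - v / (1 + v)) powr s' = (1 + v) powr (- s')" for s'
    using v by (simp add: powr_divide powr_minus_divide)
  have "(\<integral>s'\<in>{t<..}. (1 + v) powr (- s') * (Gamma s' / Gamma (s' - t)) \<partial>Ptau) = (\<integral>s'. tau_weight s' v \<partial>Ptau)"
    unfolding set_lebesgue_integral_def
    by (intro Bochner_Integration.integral_cong) (auto simp: tau_weight_def indicator_def)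
  moreover have "v / (1 + v) \<in> {0<..<1}" using v by simp
  ultimately show ?thesis
    using s unfolding phi_def eq by (simp add: tau_weight_def)
qed

lemma zeta_kernel_indicator_above:
  "zeta_kernel r h * indicator {t<..} r
     = (\<integral>\<^sup>+v. h (v / (1 + v)) * ennreal (v_weight v) * ennreal (tau_weight r v) \<partial>lborel)"
  by (cases "t < r") (simp_all add: zeta_kernel_def tau_weight_def ennreal_beta_prime_density_eq_weights mult.assoc)

lemma nn_integral_zeta_kernel_above:
  assumes [measurable]: "g \<in> borel_measurable borel" "h \<in> borel_measurable borel"
  shows "(\<integral>\<^sup>+r. g r * zeta_kernel r h * indicator {t<..} r \<partial>Ptau)
       = (\<integral>\<^sup>+v. h (v / (1 + v)) * ennreal (v_weight v) * (\<integral>\<^sup>+r. g r * ennreal (tau_weight r v) \<partial>Ptau) \<partial>lborel)"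
proof -
  have "(\<integral>\<^sup>+r. g r * zeta_kernel r h * indicator {t<..} r \<partial>Ptau)
      = (\<integral>\<^sup>+r. (\<integral>\<^sup>+v. h (v / (1 + v)) * ennreal (v_weight v) * (g r * ennreal (tau_weight r v)) \<partial>lborel) \<partial>Ptau)"
    unfolding mult.assoc[of "g _"] zeta_kernel_indicator_above
    by (intro nn_integral_cong) (simp add: nn_integral_cmult[symmetric] ac_simps)
  also have "\<dots> = (\<integral>\<^sup>+v. (\<integral>\<^sup>+r. h (v / (1 + v)) * ennreal (v_weight v) * (g r * ennreal (tau_weight r v)) \<partial>Ptau) \<partial>lborel)"
    by (rule pair_sigma_finite.Fubini'[symmetric]) (unfold_locales, measurable)
  also have "\<dots> = (\<integral>\<^sup>+v. h (v / (1 + v)) * ennreal (v_weight v) * (\<integral>\<^sup>+r. g r * ennreal (tau_weight r v) \<partial>Ptau) \<partial>lborel)"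
    by (intro nn_integral_cong nn_integral_cmult) measurable
  finally show ?thesis .
qed

lemma AE_nn_integral_tau_weight_finite: "AE v in lborel. (\<integral>\<^sup>+s. ennreal (tau_weight s v) \<partial>Ptau) \<noteq> \<infinity> \<or> v \<le> 0"
proof -
  have "(\<integral>\<^sup>+v. 1 * ennreal (v_weight v) * (\<integral>\<^sup>+s. 1 * ennreal (tau_weight s v) \<partial>Ptau) \<partial>lborel)
      = (\<integral>\<^sup>+r. 1 * zeta_kernel r (\<lambda>_. 1) * indicator {t<..} r \<partial>Ptau)"
    by (rule nn_integral_zeta_kernel_above[symmetric]) simp_all
  also have "\<dots> = (\<integral>\<^sup>+r. indicator {t<..} r \<partial>Ptau)"
    using t_pos by (intro nn_integral_cong) (auto simp: zeta_kernel_def nn_integral_beta_prime_density)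
  also have "\<dots> < \<infinity>"
    by (simp add: less_top[symmetric])
  finally have "AE v in lborel. ennreal (v_weight v) * (\<integral>\<^sup>+s. ennreal (tau_weight s v) \<partial>Ptau) \<noteq> \<infinity>"
    by (intro nn_integral_PInf_AE) simp_all
  then show ?thesis
  proof eventually_elim
    case (elim v)
    moreover have "0 < v \<Longrightarrow> ennreal (v_weight v) \<noteq> 0"
      using Gamma_real_pos[OF t_pos] by (simp add: v_weight_def)
    ultimately show ?case by (cases "0 < v") (auto simp: ennreal_mult_eq_top_iff)
  qed
qed

definition F_t :: real where
  "F_t = measure M {\<omega> \<in> space M. \<tau> \<omega> \<le> t}"

definition mean_le_t :: "(real \<Rightarrow> real) \<Rightarrow> real" where
  "mean_le_t f = 1 / F_t * (\<integral>r\<in>{0<..t}. f r \<partial>Ptau)"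

definition posterior_nn :: "(real \<Rightarrow> real) \<Rightarrow> real \<Rightarrow> ennreal" where
  "posterior_nn f x = (\<integral>\<^sup>+s. ennreal (f s * phi Ptau t s x) * indicator {t<..} s \<partial>Ptau)"

definition cond_exp_tau_nn :: "(real \<Rightarrow> real) \<Rightarrow> real \<Rightarrow> ennreal" where
  "cond_exp_tau_nn f x = ennreal (mean_le_t f) * indicator {1} x + posterior_nn f x * indicator {0<..<1} x"

lemma borel_measurable_phi[measurable (raw)]:
  assumes [measurable]: "a \<in> borel_measurable N" "b \<in> borel_measurable N"
  shows "(\<lambda>x. phi Ptau t (a x) (b x)) \<in> borel_measurable N"
  unfolding phi_def set_lebesgue_integral_def by measurable

lemma borel_measurable_cond_exp_tau_nn[measurable]:
  assumes [measurable]: "f \<in> borel_measurable borel"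
  shows "cond_exp_tau_nn f \<in> borel_measurable borel"
  unfolding cond_exp_tau_nn_def posterior_nn_def by measurable

lemma posterior_nn_mult_normalizer:
  assumes [measurable]: "f \<in> borel_measurable borel" and f_nonneg: "\<And>r. 0 \<le> f r"
    and v: "0 < v" and fin: "(\<integral>\<^sup>+s. ennreal (tau_weight s v) \<partial>Ptau) \<noteq> \<infinity>"
  shows "posterior_nn f (v / (1 + v)) * (\<integral>\<^sup>+s. ennreal (tau_weight s v) \<partial>Ptau)
       = (\<integral>\<^sup>+s. ennreal (f s) * ennreal (tau_weight s v) \<partial>Ptau)"
proof -
  define Z where "Z = (\<integral>s. tau_weight s v \<partial>Ptau)"
  have Z: "(\<integral>\<^sup>+s. ennreal (tau_weight s v) \<partial>Ptau) = ennreal Z"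
    unfolding Z_def using fin
    by (subst integral_eq_nn_integral) (auto simp: tau_weight_nonneg less_top)
  show ?thesis
  proof (cases "Z = 0")
    case True
    then have "(\<integral>\<^sup>+s. ennreal (tau_weight s v) \<partial>Ptau) = 0"
      using Z by simp
    then have "AE s in Ptau. ennreal (tau_weight s v) = 0"
      by (subst (asm) nn_integral_0_iff_AE) auto
    then have "(\<integral>\<^sup>+s. ennreal (f s) * ennreal (tau_weight s v) \<partial>Ptau) = 0"
      by (subst nn_integral_0_iff_AE) auto
    then show ?thesis using True Z by simp
  next
    case False
    with Z have "0 < Z"
      unfolding Z_def by (simp add: integral_nonneg_AE tau_weight_nonneg order.not_eq_order_implies_strict)
    have "posterior_nn f (v / (1 + v)) * ennreal Z
        = (\<integral>\<^sup>+s. ennreal (f s * (tau_weight s v / Z)) * indicator {t<..} s * ennreal Z \<partial>Ptau)"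
      unfolding posterior_nn_def
      by (subst nn_integral_multc[symmetric])
        (auto simp: phi_eq_tau_weight[OF v] Z_def[symmetric] indicator_def intro!: nn_integral_cong)
    also have "\<dots> = (\<integral>\<^sup>+s. ennreal (f s) * ennreal (tau_weight s v) \<partial>Ptau)"
    proof (intro nn_integral_cong)
      fix s
      have "0 \<le> f s * (tau_weight s v / Z)"
        using \<open>0 < Z\<close> f_nonneg tau_weight_nonneg by simp
      then have "ennreal (f s * (tau_weight s v / Z)) * ennreal Z = ennreal (f s * tau_weight s v)"
        using \<open>0 < Z\<close> by (simp add: ennreal_mult'[symmetric])
      moreover have "tau_weight s v = 0" if "\<not> t < s" using that by (simp add: tau_weight_def)
      ultimately show "ennreal (f s * (tau_weight s v / Z)) * indicator {t<..} s * ennreal Z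
          = ennreal (f s) * ennreal (tau_weight s v)"
        using f_nonneg[of s] tau_weight_nonneg[of s v] by (auto simp: indicator_def ennreal_mult)
    qed
    finally show ?thesis unfolding Z .
  qed
qed

lemma nn_integral_above_t:
  assumes [measurable]: "f \<in> borel_measurable borel" "B \<in> sets borel" and f_nonneg: "\<And>r. 0 \<le> f r"
  shows "(\<integral>\<^sup>+r. ennreal (f r) * zeta_kernel r (indicator B) * indicator {t<..} r \<partial>Ptau)
       = (\<integral>\<^sup>+r. zeta_kernel r (\<lambda>x. cond_exp_tau_nn f x * indicator B x) * indicator {t<..} r \<partial>Ptau)"
proof -
  have "(\<integral>\<^sup>+r. ennreal (f r) * zeta_kernel r (indicator B) * indicator {t<..} r \<partial>Ptau)
      = (\<integral>\<^sup>+v. indicator B (v / (1 + v)) * ennreal (v_weight v)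
           * (\<integral>\<^sup>+r. ennreal (f r) * ennreal (tau_weight r v) \<partial>Ptau) \<partial>lborel)"
    by (rule nn_integral_zeta_kernel_above) measurable
  also have "\<dots> = (\<integral>\<^sup>+v. cond_exp_tau_nn f (v / (1 + v)) * indicator B (v / (1 + v)) * ennreal (v_weight v)
           * (\<integral>\<^sup>+r. 1 * ennreal (tau_weight r v) \<partial>Ptau) \<partial>lborel)"
    using AE_nn_integral_tau_weight_finite
  proof (rule nn_integral_cong_AE[OF AE_mp], intro AE_I2 impI)
    fix v :: real
    assume fin: "(\<integral>\<^sup>+s. ennreal (tau_weight s v) \<partial>Ptau) \<noteq> \<infinity> \<or> v \<le> 0"
    show "indicator B (v / (1 + v)) * ennreal (v_weight v) * (\<integral>\<^sup>+r. ennreal (f r) * ennreal (tau_weight r v) \<partial>Ptau)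
        = cond_exp_tau_nn f (v / (1 + v)) * indicator B (v / (1 + v)) * ennreal (v_weight v)
          * (\<integral>\<^sup>+r. 1 * ennreal (tau_weight r v) \<partial>Ptau)"
    proof (cases "0 < v")
      case True
      have "cond_exp_tau_nn f (v / (1 + v)) = posterior_nn f (v / (1 + v))"
        using True by (simp add: cond_exp_tau_nn_def)
      then show ?thesis
        using posterior_nn_mult_normalizer[OF assms(1) f_nonneg True] fin True by (simp add: ac_simps)
    qed (simp add: v_weight_def)
  qed
  also have "\<dots> = (\<integral>\<^sup>+r. 1 * zeta_kernel r (\<lambda>x. cond_exp_tau_nn f x * indicator B x) * indicator {t<..} r \<partial>Ptau)"
    by (rule nn_integral_zeta_kernel_above[symmetric]) measurable
  finally show ?thesis by simp
qed

lemma emeasure_Ptau_le_t: "emeasure Ptau {..t} = ennreal F_t"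
proof -
  have "emeasure Ptau {..t} = emeasure M (\<tau> -` {..t} \<inter> space M)"
    by (subst emeasure_distr) auto
  also have "\<tau> -` {..t} \<inter> space M = {\<omega> \<in> space M. \<tau> \<omega> \<le> t}" by auto
  finally show ?thesis by (simp add: F_t_def emeasure_eq_measure)
qed

lemma mean_le_t_mult_F_t:
  assumes [measurable]: "f \<in> borel_measurable borel" and f_nonneg: "\<And>r. 0 \<le> f r"
    and f_int: "integrable Ptau f"
  shows "ennreal (mean_le_t f) * emeasure Ptau {..t} = (\<integral>\<^sup>+r. ennreal (f r) * indicator {..t} r \<partial>Ptau)"
proof (cases "F_t = 0")
  case True
  then have "{..t} \<in> null_sets Ptau" by (simp add: null_sets_def emeasure_Ptau_le_t)
  then show ?thesis by (simp add: emeasure_Ptau_le_t True nn_integral_null_set)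
next
  case False
  have "(\<integral>\<^sup>+r. ennreal (f r) * indicator {..t} r \<partial>Ptau) = (\<integral>\<^sup>+r. ennreal (indicator {0<..t} r * f r) \<partial>Ptau)"
    by (rule nn_integral_cong_AE[OF AE_mp[OF AE_Ptau_pos]]) (auto simp: indicator_def)
  also have "\<dots> = ennreal (\<integral>r\<in>{0<..t}. f r \<partial>Ptau)"
    unfolding set_lebesgue_integral_def using f_int f_nonneg
    by (subst nn_integral_eq_integral) (auto intro: integrable_real_mult_indicator simp: mult.commute)
  also have "\<dots> = ennreal (mean_le_t f * F_t)"
    using False by (simp add: mean_le_t_def)
  also have "\<dots> = ennreal (mean_le_t f) * emeasure Ptau {..t}"
    unfolding emeasure_Ptau_le_t using f_nonneg
    by (intro ennreal_mult) (auto simp: mean_le_t_def F_t_def set_lebesgue_integral_def intro!: integral_nonneg)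
  finally show ?thesis ..
qed

lemma nn_integral_le_t:
  assumes [measurable]: "f \<in> borel_measurable borel" "B \<in> sets borel" and f_nonneg: "\<And>r. 0 \<le> f r"
    and f_int: "integrable Ptau f"
  shows "(\<integral>\<^sup>+r. ennreal (f r) * zeta_kernel r (indicator B) * indicator {..t} r \<partial>Ptau)
       = (\<integral>\<^sup>+r. zeta_kernel r (\<lambda>x. cond_exp_tau_nn f x * indicator B x) * indicator {..t} r \<partial>Ptau)"
proof -
  have "(\<integral>\<^sup>+r. ennreal (f r) * zeta_kernel r (indicator B) * indicator {..t} r \<partial>Ptau)
      = (\<integral>\<^sup>+r. indicator B 1 * (ennreal (f r) * indicator {..t} r) \<partial>Ptau)"
    by (intro nn_integral_cong) (simp add: zeta_kernel_def indicator_def)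
  also have "\<dots> = indicator B 1 * (\<integral>\<^sup>+r. ennreal (f r) * indicator {..t} r \<partial>Ptau)"
    by (rule nn_integral_cmult) simp
  also have "\<dots> = indicator B 1 * (ennreal (mean_le_t f) * emeasure Ptau {..t})"
    by (simp only: mean_le_t_mult_F_t[OF assms(1) f_nonneg f_int])
  also have "\<dots> = (\<integral>\<^sup>+r. (indicator B 1 * ennreal (mean_le_t f)) * indicator {..t} r \<partial>Ptau)"
    by (subst nn_integral_cmult_indicator) (simp_all add: mult.assoc)
  also have "\<dots> = (\<integral>\<^sup>+r. zeta_kernel r (\<lambda>x. cond_exp_tau_nn f x * indicator B x) * indicator {..t} r \<partial>Ptau)"
    by (intro nn_integral_cong) (auto simp: zeta_kernel_def cond_exp_tau_nn_def indicator_def)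
  finally show ?thesis .
qed

lemma nn_integral_tau_indicator_zeta:
  assumes [measurable]: "f \<in> borel_measurable borel" "B \<in> sets borel" and f_nonneg: "\<And>r. 0 \<le> f r"
    and f_int: "integrable Ptau f"
  shows "(\<integral>\<^sup>+\<omega>. ennreal (f (\<tau> \<omega>)) * indicator B (zeta \<gamma> \<tau> t \<omega>) \<partial>M)
       = (\<integral>\<^sup>+\<omega>. cond_exp_tau_nn f (zeta \<gamma> \<tau> t \<omega>) * indicator B (zeta \<gamma> \<tau> t \<omega>) \<partial>M)"
proof -
  have split: "(\<integral>\<^sup>+r. g r \<partial>Ptau) = (\<integral>\<^sup>+r. g r * indicator {..t} r \<partial>Ptau) + (\<integral>\<^sup>+r. g r * indicator {t<..} r \<partial>Ptau)"
    if [measurable]: "g \<in> borel_measurable borel" for g :: "real \<Rightarrow> ennreal"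
    by (subst nn_integral_add[symmetric]) (auto simp: indicator_def intro!: nn_integral_cong)
  have "(\<integral>\<^sup>+\<omega>. ennreal (f (\<tau> \<omega>)) * indicator B (zeta \<gamma> \<tau> t \<omega>) \<partial>M)
      = (\<integral>\<^sup>+r. ennreal (f r) * zeta_kernel r (indicator B) \<partial>Ptau)"
    by (rule nn_integral_tau_zeta_kernel) measurable
  also have "\<dots> = (\<integral>\<^sup>+r. ennreal (f r) * zeta_kernel r (indicator B) * indicator {..t} r \<partial>Ptau)
      + (\<integral>\<^sup>+r. ennreal (f r) * zeta_kernel r (indicator B) * indicator {t<..} r \<partial>Ptau)"
    by (rule split) measurable
  also have "\<dots> = (\<integral>\<^sup>+r. zeta_kernel r (\<lambda>x. cond_exp_tau_nn f x * indicator B x) * indicator {..t} r \<partial>Ptau)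
      + (\<integral>\<^sup>+r. zeta_kernel r (\<lambda>x. cond_exp_tau_nn f x * indicator B x) * indicator {t<..} r \<partial>Ptau)"
    by (simp only: nn_integral_le_t[OF assms] nn_integral_above_t[OF assms(1-3)])
  also have "\<dots> = (\<integral>\<^sup>+r. zeta_kernel r (\<lambda>x. cond_exp_tau_nn f x * indicator B x) \<partial>Ptau)"
    by (rule split[symmetric]) measurable
  also have "\<dots> = (\<integral>\<^sup>+\<omega>. cond_exp_tau_nn f (zeta \<gamma> \<tau> t \<omega>) * indicator B (zeta \<gamma> \<tau> t \<omega>) \<partial>M)"
    using nn_integral_tau_zeta_kernel[of "\<lambda>_. 1" "\<lambda>x. cond_exp_tau_nn f x * indicator B x"] by simp
  finally show ?thesis .
qed

definition cond_exp_tau :: "(real \<Rightarrow> real) \<Rightarrow> real \<Rightarrow> real" where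
  "cond_exp_tau g x = mean_le_t g * indicator {1} x
     + (\<integral>r\<in>{t<..}. g r * phi Ptau t r x \<partial>Ptau) * indicator {0<..<1} x"

lemma borel_measurable_cond_exp_tau[measurable]:
  assumes [measurable]: "g \<in> borel_measurable borel"
  shows "cond_exp_tau g \<in> borel_measurable borel"
  unfolding cond_exp_tau_def set_lebesgue_integral_def by measurable

lemma phi_nonneg: "t < s \<Longrightarrow> 0 \<le> phi Ptau t s x"
  using t_pos unfolding phi_def set_lebesgue_integral_def
  by (auto intro!: mult_nonneg_nonneg divide_nonneg_nonneg integral_nonneg less_imp_le
      simp: indicator_def)

lemma posterior_nn_finite:
  assumes [measurable]: "f \<in> borel_measurable borel" and f_nonneg: "\<And>r. 0 \<le> f r"
    and fin: "posterior_nn f x \<noteq> \<infinity>"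
  shows "set_integrable Ptau {t<..} (\<lambda>r. f r * phi Ptau t r x)"
    and "ennreal (\<integral>r\<in>{t<..}. f r * phi Ptau t r x \<partial>Ptau) = posterior_nn f x"
proof -
  have nonneg: "0 \<le> indicator {t<..} r * (f r * phi Ptau t r x)" for r
    using f_nonneg phi_nonneg by (auto simp: indicator_def)
  have eq: "(\<integral>\<^sup>+r. ennreal (indicator {t<..} r * (f r * phi Ptau t r x)) \<partial>Ptau) = posterior_nn f x"
    unfolding posterior_nn_def by (intro nn_integral_cong) (simp add: indicator_def)
  show "set_integrable Ptau {t<..} (\<lambda>r. f r * phi Ptau t r x)"
    unfolding set_integrable_def using fin by (intro integrableI_nonneg) (auto simp: nonneg eq less_top)
  then show "ennreal (\<integral>r\<in>{t<..}. f r * phi Ptau t r x \<partial>Ptau) = posterior_nn f x"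
    unfolding set_integrable_def set_lebesgue_integral_def
    by (subst nn_integral_eq_integral[symmetric]) (auto simp: nonneg eq)
qed

lemma mean_le_t_nonneg: "(\<And>r. 0 \<le> f r) \<Longrightarrow> 0 \<le> mean_le_t f"
  unfolding mean_le_t_def F_t_def set_lebesgue_integral_def by (auto intro!: integral_nonneg)

lemma cond_exp_tau_nn_finite:
  assumes [measurable]: "f \<in> borel_measurable borel" and f_nonneg: "\<And>r. 0 \<le> f r"
    and fin: "cond_exp_tau_nn f x \<noteq> \<infinity>"
  shows "cond_exp_tau_nn f x = ennreal (cond_exp_tau f x)"
proof (cases "x \<in> {0<..<1}")
  case True
  then have "x \<noteq> 1" by auto
  with True fin show ?thesis
    using posterior_nn_finite(2)[OF assms(1) f_nonneg] by (simp add: cond_exp_tau_nn_def cond_exp_tau_def)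
qed (auto simp: cond_exp_tau_nn_def cond_exp_tau_def indicator_def)


lemma integrable_tau_comp:
  fixes f :: "real \<Rightarrow> real"
  assumes [measurable]: "f \<in> borel_measurable borel" and "integrable Ptau f"
  shows "integrable M (\<lambda>\<omega>. f (\<tau> \<omega>))"
  using integrable_distr_eq[of \<tau> M borel f] assms(2) by simp

lemma cond_exp_tau_nonneg: "(\<And>r. 0 \<le> f r) \<Longrightarrow> 0 \<le> cond_exp_tau f x"
  unfolding cond_exp_tau_def set_lebesgue_integral_def
  by (intro add_nonneg_nonneg mult_nonneg_nonneg mean_le_t_nonneg integral_nonneg)
    (auto simp: indicator_def phi_nonneg)

lemma nn_integral_cond_exp_tau_nn_zeta:
  assumes [measurable]: "f \<in> borel_measurable borel" and f_nonneg: "\<And>r. 0 \<le> f r"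
    and f_int: "integrable Ptau f"
  shows "(\<integral>\<^sup>+\<omega>. cond_exp_tau_nn f (zeta \<gamma> \<tau> t \<omega>) \<partial>M) = ennreal (\<integral>\<omega>. f (\<tau> \<omega>) \<partial>M)"
  using nn_integral_tau_indicator_zeta[OF assms(1) sets.top f_nonneg f_int]
    nn_integral_eq_integral[OF integrable_tau_comp[OF assms(1) f_int]] f_nonneg
  by simp

lemma AE_cond_exp_tau_nn_finite:
  assumes [measurable]: "f \<in> borel_measurable borel" and f_nonneg: "\<And>r. 0 \<le> f r"
    and f_int: "integrable Ptau f"
  shows "AE \<omega> in M. cond_exp_tau_nn f (zeta \<gamma> \<tau> t \<omega>) \<noteq> \<infinity>"
  by (rule nn_integral_PInf_AE) (simp_all add: nn_integral_cond_exp_tau_nn_zeta[OF assms])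

lemma AE_cond_exp_tau_nn_zeta:
  assumes [measurable]: "f \<in> borel_measurable borel" and f_nonneg: "\<And>r. 0 \<le> f r"
    and f_int: "integrable Ptau f"
  shows "AE \<omega> in M. cond_exp_tau_nn f (zeta \<gamma> \<tau> t \<omega>) = ennreal (cond_exp_tau f (zeta \<gamma> \<tau> t \<omega>))"
  using AE_cond_exp_tau_nn_finite[OF assms] by eventually_elim (rule cond_exp_tau_nn_finite[OF assms(1,2)])

lemma integrable_cond_exp_tau_zeta:
  assumes [measurable]: "f \<in> borel_measurable borel" and f_nonneg: "\<And>r. 0 \<le> f r"
    and f_int: "integrable Ptau f"
  shows "integrable M (\<lambda>\<omega>. cond_exp_tau f (zeta \<gamma> \<tau> t \<omega>))"
proof (rule integrableI_nonneg)
  show "AE \<omega> in M. 0 \<le> cond_exp_tau f (zeta \<gamma> \<tau> t \<omega>)"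
    using f_nonneg by (simp add: cond_exp_tau_nonneg)
  show "(\<integral>\<^sup>+\<omega>. ennreal (cond_exp_tau f (zeta \<gamma> \<tau> t \<omega>)) \<partial>M) < \<infinity>"
    by (subst nn_integral_cong_AE[OF AE_cond_exp_tau_nn_zeta[OF assms], symmetric])
      (simp add: nn_integral_cond_exp_tau_nn_zeta[OF assms])
qed measurable

lemma integral_indicator_cond_exp_tau_zeta:
  assumes [measurable]: "f \<in> borel_measurable borel" "B \<in> sets borel" and f_nonneg: "\<And>r. 0 \<le> f r"
    and f_int: "integrable Ptau f"
  shows "(\<integral>\<omega>. indicator B (zeta \<gamma> \<tau> t \<omega>) * f (\<tau> \<omega>) \<partial>M)
       = (\<integral>\<omega>. indicator B (zeta \<gamma> \<tau> t \<omega>) * cond_exp_tau f (zeta \<gamma> \<tau> t \<omega>) \<partial>M)"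
proof -
  have "(\<integral>\<^sup>+\<omega>. ennreal (indicator B (zeta \<gamma> \<tau> t \<omega>) * f (\<tau> \<omega>)) \<partial>M)
      = (\<integral>\<^sup>+\<omega>. ennreal (f (\<tau> \<omega>)) * indicator B (zeta \<gamma> \<tau> t \<omega>) \<partial>M)"
    by (intro nn_integral_cong) (simp add: indicator_def)
  also have "\<dots> = (\<integral>\<^sup>+\<omega>. cond_exp_tau_nn f (zeta \<gamma> \<tau> t \<omega>) * indicator B (zeta \<gamma> \<tau> t \<omega>) \<partial>M)"
    by (rule nn_integral_tau_indicator_zeta[OF assms])
  also have "\<dots> = (\<integral>\<^sup>+\<omega>. ennreal (indicator B (zeta \<gamma> \<tau> t \<omega>) * cond_exp_tau f (zeta \<gamma> \<tau> t \<omega>)) \<partial>M)"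
    using AE_cond_exp_tau_nn_zeta[OF assms(1,3,4)]
    by (rule nn_integral_cong_AE[OF AE_mp], intro AE_I2) (simp add: indicator_def)
  finally show ?thesis
    using f_nonneg cond_exp_tau_nonneg[OF f_nonneg]
    by (simp add: integral_eq_nn_integral)
qed


lemma cond_exp_tau_pos_neg_parts:
  fixes g :: "real \<Rightarrow> real"
  assumes [measurable]: "g \<in> borel_measurable borel" and g_int: "integrable Ptau g"
    and fin_pos: "cond_exp_tau_nn (\<lambda>r. max (g r) 0) x \<noteq> \<infinity>"
    and fin_neg: "cond_exp_tau_nn (\<lambda>r. max (- g r) 0) x \<noteq> \<infinity>"
  shows "cond_exp_tau g x = cond_exp_tau (\<lambda>r. max (g r) 0) x - cond_exp_tau (\<lambda>r. max (- g r) 0) x"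
proof -
  define gp gm where "gp = (\<lambda>r. max (g r) 0)" and "gm = (\<lambda>r. max (- g r) 0)"
  have [measurable]: "gp \<in> borel_measurable borel" "gm \<in> borel_measurable borel"
    unfolding gp_def gm_def by measurable
  have g_eq: "g r = gp r - gm r" for r by (simp add: gp_def gm_def max_def)
  have "integrable Ptau gp" "integrable Ptau gm"
    using g_int by (auto simp: gp_def gm_def)
  then have "set_integrable Ptau {0<..t} gp" "set_integrable Ptau {0<..t} gm"
    unfolding set_integrable_def by (auto intro!: integrable_mult_indicator simp del: real_scaleR_def)
  then have mean: "mean_le_t g = mean_le_t gp - mean_le_t gm"
    unfolding mean_le_t_def g_eq by (simp add: right_diff_distrib)
  have post: "(\<integral>r\<in>{t<..}. g r * phi Ptau t r x \<partial>Ptau)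
      = (\<integral>r\<in>{t<..}. gp r * phi Ptau t r x \<partial>Ptau) - (\<integral>r\<in>{t<..}. gm r * phi Ptau t r x \<partial>Ptau)"
    if x: "x \<in> {0<..<1}"
  proof -
    have "posterior_nn gp x \<noteq> \<infinity>" "posterior_nn gm x \<noteq> \<infinity>"
      using fin_pos fin_neg x by (simp_all add: cond_exp_tau_nn_def gp_def gm_def)
    then have "set_integrable Ptau {t<..} (\<lambda>r. gp r * phi Ptau t r x)"
      "set_integrable Ptau {t<..} (\<lambda>r. gm r * phi Ptau t r x)"
      by (auto intro!: posterior_nn_finite(1) simp: gp_def gm_def)
    then show ?thesis unfolding g_eq by (simp add: left_diff_distrib)
  qed
  show ?thesis
    unfolding gp_def[symmetric] gm_def[symmetric]
    by (cases "x \<in> {0<..<1}") (simp_all add: cond_exp_tau_def mean post algebra_simps)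
qed


lemma AE_cond_exp_tau_pos_neg_parts:
  fixes g :: "real \<Rightarrow> real"
  assumes [measurable]: "g \<in> borel_measurable borel" and g_int: "integrable Ptau g"
  shows "AE \<omega> in M. cond_exp_tau g (zeta \<gamma> \<tau> t \<omega>)
     = cond_exp_tau (\<lambda>r. max (g r) 0) (zeta \<gamma> \<tau> t \<omega>) - cond_exp_tau (\<lambda>r. max (- g r) 0) (zeta \<gamma> \<tau> t \<omega>)"
proof -
  have "AE \<omega> in M. cond_exp_tau_nn (\<lambda>r. max (g r) 0) (zeta \<gamma> \<tau> t \<omega>) \<noteq> \<infinity>"
    and "AE \<omega> in M. cond_exp_tau_nn (\<lambda>r. max (- g r) 0) (zeta \<gamma> \<tau> t \<omega>) \<noteq> \<infinity>"
    using g_int by (intro AE_cond_exp_tau_nn_finite; simp)+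
  then show ?thesis
    by eventually_elim (rule cond_exp_tau_pos_neg_parts[OF assms])
qed

lemma integrable_cond_exp_tau_zeta_signed:
  fixes g :: "real \<Rightarrow> real"
  assumes [measurable]: "g \<in> borel_measurable borel" and g_int: "integrable Ptau g"
  shows "integrable M (\<lambda>\<omega>. cond_exp_tau g (zeta \<gamma> \<tau> t \<omega>))"
proof -
  have "integrable M (\<lambda>\<omega>. cond_exp_tau (\<lambda>r. max (g r) 0) (zeta \<gamma> \<tau> t \<omega>))"
    and "integrable M (\<lambda>\<omega>. cond_exp_tau (\<lambda>r. max (- g r) 0) (zeta \<gamma> \<tau> t \<omega>))"
    using g_int by (intro integrable_cond_exp_tau_zeta; simp)+
  from Bochner_Integration.integrable_diff[OF this] show ?thesis
  proof (rule integrable_cong_AE_imp)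
    show "AE \<omega> in M. cond_exp_tau (\<lambda>r. max (g r) 0) (zeta \<gamma> \<tau> t \<omega>)
        - cond_exp_tau (\<lambda>r. max (- g r) 0) (zeta \<gamma> \<tau> t \<omega>) = cond_exp_tau g (zeta \<gamma> \<tau> t \<omega>)"
      using AE_cond_exp_tau_pos_neg_parts[OF assms] by eventually_elim simp
  qed measurable
qed

lemma integral_indicator_cond_exp_tau_zeta_signed:
  fixes g :: "real \<Rightarrow> real"
  assumes [measurable]: "g \<in> borel_measurable borel" "B \<in> sets borel" and g_int: "integrable Ptau g"
  shows "(\<integral>\<omega>. indicator B (zeta \<gamma> \<tau> t \<omega>) * g (\<tau> \<omega>) \<partial>M)
       = (\<integral>\<omega>. indicator B (zeta \<gamma> \<tau> t \<omega>) * cond_exp_tau g (zeta \<gamma> \<tau> t \<omega>) \<partial>M)"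
proof -
  define gp gm where "gp = (\<lambda>r. max (g r) 0)" and "gm = (\<lambda>r. max (- g r) 0)"
  have [measurable]: "gp \<in> borel_measurable borel" "gm \<in> borel_measurable borel"
    unfolding gp_def gm_def by measurable
  have gp: "integrable Ptau gp" "\<And>r. 0 \<le> gp r" and gm: "integrable Ptau gm" "\<And>r. 0 \<le> gm r"
    using g_int by (auto simp: gp_def gm_def)
  have int: "integrable M (\<lambda>\<omega>. indicator B (zeta \<gamma> \<tau> t \<omega>) * h \<omega>)"
    if "integrable M h" for h :: "'a \<Rightarrow> real"
    by (rule integrable_indicator_comp_mult[OF that zeta_measurable assms(2)])
  have cond_gp: "integrable M (\<lambda>\<omega>. cond_exp_tau gp (zeta \<gamma> \<tau> t \<omega>))"
    and cond_gm: "integrable M (\<lambda>\<omega>. cond_exp_tau gm (zeta \<gamma> \<tau> t \<omega>))"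
    using integrable_cond_exp_tau_zeta gp gm by simp_all
  have "(\<integral>\<omega>. indicator B (zeta \<gamma> \<tau> t \<omega>) * g (\<tau> \<omega>) \<partial>M)
      = (\<integral>\<omega>. indicator B (zeta \<gamma> \<tau> t \<omega>) * gp (\<tau> \<omega>) - indicator B (zeta \<gamma> \<tau> t \<omega>) * gm (\<tau> \<omega>) \<partial>M)"
    by (intro Bochner_Integration.integral_cong) (auto simp: gp_def gm_def max_def algebra_simps)
  also have "\<dots> = (\<integral>\<omega>. indicator B (zeta \<gamma> \<tau> t \<omega>) * gp (\<tau> \<omega>) \<partial>M)
      - (\<integral>\<omega>. indicator B (zeta \<gamma> \<tau> t \<omega>) * gm (\<tau> \<omega>) \<partial>M)"
    using gp gm by (intro Bochner_Integration.integral_diff int integrable_tau_comp) simp_all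
  also have "\<dots> = (\<integral>\<omega>. indicator B (zeta \<gamma> \<tau> t \<omega>) * cond_exp_tau gp (zeta \<gamma> \<tau> t \<omega>) \<partial>M)
      - (\<integral>\<omega>. indicator B (zeta \<gamma> \<tau> t \<omega>) * cond_exp_tau gm (zeta \<gamma> \<tau> t \<omega>) \<partial>M)"
    using integral_indicator_cond_exp_tau_zeta[OF _ assms(2) gp(2,1)] integral_indicator_cond_exp_tau_zeta[OF _ assms(2) gm(2,1)]
    by simp
  also have "\<dots> = (\<integral>\<omega>. indicator B (zeta \<gamma> \<tau> t \<omega>) * cond_exp_tau gp (zeta \<gamma> \<tau> t \<omega>)
      - indicator B (zeta \<gamma> \<tau> t \<omega>) * cond_exp_tau gm (zeta \<gamma> \<tau> t \<omega>) \<partial>M)"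
    by (rule Bochner_Integration.integral_diff[symmetric, OF int[OF cond_gp] int[OF cond_gm]])
  also have "\<dots> = (\<integral>\<omega>. indicator B (zeta \<gamma> \<tau> t \<omega>) * cond_exp_tau g (zeta \<gamma> \<tau> t \<omega>) \<partial>M)"
  proof (rule integral_cong_AE)
    show "AE \<omega> in M. indicator B (zeta \<gamma> \<tau> t \<omega>) * cond_exp_tau gp (zeta \<gamma> \<tau> t \<omega>)
        - indicator B (zeta \<gamma> \<tau> t \<omega>) * cond_exp_tau gm (zeta \<gamma> \<tau> t \<omega>)
        = indicator B (zeta \<gamma> \<tau> t \<omega>) * cond_exp_tau g (zeta \<gamma> \<tau> t \<omega>)"
      using AE_cond_exp_tau_pos_neg_parts[OF assms(1) g_int]
      by eventually_elim (simp add: gp_def gm_def right_diff_distrib)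
  qed measurable
  finally show ?thesis .
qed

theorem real_cond_exp_tau_given_zeta:
  fixes g :: "real \<Rightarrow> real"
  assumes [measurable]: "g \<in> borel_measurable borel" and g_int: "integrable M (\<lambda>\<omega>. g (\<tau> \<omega>))"
  shows "AE \<omega> in M. real_cond_exp M (vimage_algebra (space M) (zeta \<gamma> \<tau> t) borel) (\<lambda>\<omega>. g (\<tau> \<omega>)) \<omega>
    = cond_exp_tau g (zeta \<gamma> \<tau> t \<omega>)"
proof -
  let ?F = "vimage_algebra (space M) (zeta \<gamma> \<tau> t) borel"
  have sets_F: "sets ?F = {zeta \<gamma> \<tau> t -` B \<inter> space M | B. B \<in> sets borel}"
    by (rule sets_vimage_algebra2) simp
  interpret F: finite_measure_subalgebra M ?F
    by unfold_locales (auto simp: subalgebra_def sets_F)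
  have g_int': "integrable Ptau g"
    using g_int by (subst integrable_distr_eq) auto
  show ?thesis
  proof (rule F.real_cond_exp_charact)
    fix A assume "A \<in> sets ?F"
    then obtain B where [measurable]: "B \<in> sets borel" and A: "A = zeta \<gamma> \<tau> t -` B \<inter> space M"
      by (auto simp: sets_F)
    then have ind: "indicator A \<omega> = indicator B (zeta \<gamma> \<tau> t \<omega>)" if "\<omega> \<in> space M" for \<omega>
      using that by (simp add: indicator_def)
    have "(\<integral>\<omega>\<in>A. g (\<tau> \<omega>) \<partial>M) = (\<integral>\<omega>. indicator B (zeta \<gamma> \<tau> t \<omega>) * g (\<tau> \<omega>) \<partial>M)"
      unfolding set_lebesgue_integral_def by (intro Bochner_Integration.integral_cong) (simp_all add: ind)
    also have "\<dots> = (\<integral>\<omega>. indicator B (zeta \<gamma> \<tau> t \<omega>) * cond_exp_tau g (zeta \<gamma> \<tau> t \<omega>) \<partial>M)"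
      by (rule integral_indicator_cond_exp_tau_zeta_signed) (simp_all add: g_int')
    also have "\<dots> = (\<integral>\<omega>\<in>A. cond_exp_tau g (zeta \<gamma> \<tau> t \<omega>) \<partial>M)"
      unfolding set_lebesgue_integral_def by (intro Bochner_Integration.integral_cong) (simp_all add: ind)
    finally show "(\<integral>\<omega>\<in>A. g (\<tau> \<omega>) \<partial>M) = (\<integral>\<omega>\<in>A. cond_exp_tau g (zeta \<gamma> \<tau> t \<omega>) \<partial>M)" .
  next
    show "(\<lambda>\<omega>. cond_exp_tau g (zeta \<gamma> \<tau> t \<omega>)) \<in> borel_measurable ?F"
      by (rule measurable_compose[OF measurable_vimage_algebra1]) simp_all
  qed (simp_all add: g_int integrable_cond_exp_tau_zeta_signed[OF _ g_int'])
qed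

end


theorem mainTheorem5:
  fixes M :: "'a measure" and \<gamma> :: "real \<Rightarrow> 'a \<Rightarrow> real" and \<tau> :: "'a \<Rightarrow> real"
    and g :: "real \<Rightarrow> real" and t :: real
  assumes complete: "complete_measure M"
    and gp: "gamma_process M \<gamma>"
    and tau_meas: "\<tau> \<in> borel_measurable M"
    and tau_pos: "\<forall>\<omega>\<in>space M. 0 < \<tau> \<omega>"
    and indep: "prob_space.indep_set M
                  (sigma_sets (space M) {\<tau> -` A \<inter> space M | A. A \<in> sets borel})
                  (sigma_sets (space M) (\<Union>s\<in>{0..}. {\<gamma> s -` A \<inter> space M | A. A \<in> sets borel}))"
    and t_pos: "0 < t"
    and F_pos: "0 < measure M {\<omega>\<in>space M. \<tau> \<omega> \<le> t}"
    and g_meas: "g \<in> borel_measurable borel"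
    and g_int: "integrable M (\<lambda>\<omega>. g (\<tau> \<omega>))"
  shows "AE \<omega> in M.
     real_cond_exp M (vimage_algebra (space M) (zeta \<gamma> \<tau> t) borel) (\<lambda>\<omega>. g (\<tau> \<omega>)) \<omega> =
       (1 / measure M {\<omega>\<in>space M. \<tau> \<omega> \<le> t}) * (\<integral>r\<in>{0<..t}. g r \<partial>(distr M borel \<tau>))
         * indicator {1} (zeta \<gamma> \<tau> t \<omega>)
     + (\<integral>r\<in>{t<..}. g r * phi (distr M borel \<tau>) t r (zeta \<gamma> \<tau> t \<omega>) \<partial>(distr M borel \<tau>))
         * indicator {0<..<1} (zeta \<gamma> \<tau> t \<omega>)"
  \<comment> \<open>Neither completeness of \<open>M\<close> nor \<open>F(t) > 0\<close> is used: if \<open>F(t) = 0\<close>, the event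
    \<open>{\<tau> \<le> t}\<close> is null and the junk value \<open>1 / 0 = 0\<close> in the first summand is harmless.\<close>
proof -
  have "prob_space M" using gp by (simp add: gamma_process_def)
  then interpret gamma_bridge M \<gamma> \<tau> t
    using gp tau_meas tau_pos indep t_pos by (simp add: gamma_bridge_def gamma_bridge_axioms_def)
  show ?thesis
    using real_cond_exp_tau_given_zeta[OF g_meas g_int] by (simp add: cond_exp_tau_def mean_le_t_def F_t_def)
qed

end
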